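(* Let $T$ be a non-degenerate T-graph, $F$ a spanning forest of $T$, and $F^\dagger$ its dual forest equipped with an orientation in which each connected component is oriented towards a chosen end. Then $M(F^\dagger)$ is a perfect matching of the hexagonal lattice $\mathcal H$.
   Context: Setup. $\mathcal H$ is the hexagonal lattice with black/white bipartition, $\mathcal H^\dagger$ its dual triangular lattice. A T-graph $T=\psi(\mathcal H^\dagger)\subset\mathbb C$ (built from a triangle $\Delta$ and a unit complex number $\lambda$) is such that each black vertex $b$ of $\mathcal H$ corresponds to a segment $\psi(b)$ and each white vertex $w$ to a triangular face $\psi(w)$ of $T$; if an edge of $T$ lies on $\psi(b)$ and on the boundary of $\psi(w)$ then $b$ and $w$ are adjacent in $\mathcal H$. Non-degenerate: every vertex of $T$ lies in exactly three segments, being an endpoint of two and in the interior of exactly one, and no face is degenerate; each segment contains exactly one vertex of $T$ in its interior. $T$ is a directed graph: from each vertex $v$ there are two outgoing edges, towards the two endpoints of the segment containing $v$ in its interior. A spanning forest $F$ of $T$ is a set of directed edges such that every vertex has exactly one outgoing edge in $F$ and $F$ contains no cycle even ignoring orientation. The dual $F^\dagger$ is the graph whose vertices are the faces of $T$, with an edge between two faces across each edge of $T$ not in $F$; it is a spanning forest with no finite component; each component is oriented towards a chosen end. Definition of $M(F^\dagger)$: for each white $w$, the unique outgoing edge of $F^\dagger$ from $\psi(w)$ crosses an edge of $T$ lying on a segment $\psi(b)$ with $b$ adjacent to $w$; $w$ is matched to this $b$. *)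

theory Defs
  imports "HOL-Analysis.Analysis"
begin

text \<open>Faces of H (= vertices of the triangular lattice H-dagger) are indexed by
  Z x Z (points i*u + j*v of the triangular lattice).  Black vertices of H are the
  upward triangles, white vertices the downward triangles, both indexed by Z x Z.\<close>

type_synonym face = "int \<times> int"
type_synonym black = "int \<times> int"
type_synonym white = "int \<times> int"

definition bfaces :: "black \<Rightarrow> face set" where
  "bfaces b = {(fst b, snd b), (fst b + 1, snd b), (fst b, snd b + 1)}"

definition wfaces :: "white \<Rightarrow> face set" where
  "wfaces w = {(fst w + 1, snd w), (fst w, snd w + 1), (fst w + 1, snd w + 1)}"

text \<open>Adjacency in H: two triangles sharing a side.\<close>
definition hex_adj :: "white \<Rightarrow> black \<Rightarrow> bool" where
  "hex_adj w b \<longleftrightarrow> w = b \<or> w = (fst b - 1, snd b) \<or> w = (fst b, snd b - 1)"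

definition seg :: "(face \<Rightarrow> complex) \<Rightarrow> black \<Rightarrow> complex set" where
  "seg \<psi> b = convex hull (\<psi> ` bfaces b)"

definition tri :: "(face \<Rightarrow> complex) \<Rightarrow> white \<Rightarrow> complex set" where
  "tri \<psi> w = convex hull (\<psi> ` wfaces w)"

definition Tverts :: "(face \<Rightarrow> complex) \<Rightarrow> complex set" where
  "Tverts \<psi> = range \<psi>"

definition T_edge :: "(face \<Rightarrow> complex) \<Rightarrow> complex \<times> complex \<Rightarrow> bool" where
  "T_edge \<psi> e \<longleftrightarrow> fst e \<in> Tverts \<psi> \<and> snd e \<in> Tverts \<psi> \<and>
     (\<exists>b. fst e \<in> rel_interior (seg \<psi> b) \<and> snd e \<in> seg \<psi> b - rel_interior (seg \<psi> b))"

definition edge_on_seg :: "(face \<Rightarrow> complex) \<Rightarrow> complex \<times> complex \<Rightarrow> black \<Rightarrow> bool" where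
  "edge_on_seg \<psi> e b \<longleftrightarrow> closed_segment (fst e) (snd e) \<subseteq> seg \<psi> b"

definition edge_on_face :: "(face \<Rightarrow> complex) \<Rightarrow> complex \<times> complex \<Rightarrow> white \<Rightarrow> bool" where
  "edge_on_face \<psi> e w \<longleftrightarrow> closed_segment (fst e) (snd e) \<subseteq> frontier (tri \<psi> w)"

definition is_Tgraph :: "(face \<Rightarrow> complex) \<Rightarrow> bool" where
  "is_Tgraph \<psi> \<longleftrightarrow>
     (\<forall>b. collinear (\<psi> ` bfaces b)) \<and>
     (\<forall>w. \<not> collinear (\<psi> ` wfaces w)) \<and>
     (\<forall>w w'. w \<noteq> w' \<longrightarrow> interior (tri \<psi> w) \<inter> interior (tri \<psi> w') = {}) \<and>
     (\<Union>w. tri \<psi> w) = UNIV \<and>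
     (\<forall>e b w. T_edge \<psi> e \<and> edge_on_seg \<psi> e b \<and> edge_on_face \<psi> e w \<longrightarrow> hex_adj w b)"

definition nondegenerate :: "(face \<Rightarrow> complex) \<Rightarrow> bool" where
  "nondegenerate \<psi> \<longleftrightarrow>
     (\<forall>p \<in> Tverts \<psi>.
        card {b. p \<in> seg \<psi> b} = 3 \<and>
        card {b. p \<in> seg \<psi> b - rel_interior (seg \<psi> b)} = 2 \<and>
        card {b. p \<in> rel_interior (seg \<psi> b)} = 1) \<and>
     (\<forall>w. \<not> collinear (\<psi> ` wfaces w)) \<and>
     (\<forall>b. card (Tverts \<psi> \<inter> rel_interior (seg \<psi> b)) = 1)"

definition und :: "(complex \<times> complex) set \<Rightarrow> complex \<Rightarrow> complex \<Rightarrow> bool" where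
  "und F p q \<longleftrightarrow> (p, q) \<in> F \<or> (q, p) \<in> F"

definition no_undirected_cycle :: "(complex \<times> complex) set \<Rightarrow> bool" where
  "no_undirected_cycle F \<longleftrightarrow>
     \<not> (\<exists>p q. (p, q) \<in> F \<and> (q, p) \<in> F) \<and>
     \<not> (\<exists>xs. length xs \<ge> 3 \<and> distinct xs \<and>
           (\<forall>i < length xs. und F (xs ! i) (xs ! ((i + 1) mod length xs))))"

definition spanning_forest :: "(face \<Rightarrow> complex) \<Rightarrow> (complex \<times> complex) set \<Rightarrow> bool" where
  "spanning_forest \<psi> F \<longleftrightarrow>
     (\<forall>e \<in> F. T_edge \<psi> e) \<and>
     (\<forall>v \<in> Tverts \<psi>. \<exists>!q. (v, q) \<in> F) \<and>
     no_undirected_cycle F"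

definition dual_adj :: "(face \<Rightarrow> complex) \<Rightarrow> (complex \<times> complex) set \<Rightarrow>
    white \<Rightarrow> complex \<times> complex \<Rightarrow> white \<Rightarrow> bool" where
  "dual_adj \<psi> F w e w' \<longleftrightarrow> T_edge \<psi> e \<and> e \<notin> F \<and> w \<noteq> w' \<and>
     edge_on_face \<psi> e w \<and> edge_on_face \<psi> e w'"

definition is_ray :: "(white \<Rightarrow> 'e \<Rightarrow> white \<Rightarrow> bool) \<Rightarrow> (nat \<Rightarrow> white) \<Rightarrow> (nat \<Rightarrow> 'e) \<Rightarrow> bool" where
  "is_ray adj x es \<longleftrightarrow> inj x \<and> (\<forall>k. adj (x k) (es k) (x (Suc k)))"

definition same_end :: "(nat \<Rightarrow> white) \<Rightarrow> (nat \<Rightarrow> white) \<Rightarrow> bool" where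
  "same_end x y \<longleftrightarrow> (\<exists>i j. \<forall>k. x (i + k) = y (j + k))"

definition connected_in :: "(white \<Rightarrow> 'e \<Rightarrow> white \<Rightarrow> bool) \<Rightarrow> white \<Rightarrow> white \<Rightarrow> bool" where
  "connected_in adj u v \<longleftrightarrow> (u, v) \<in> {(a, c). \<exists>e. adj a e c}\<^sup>*"

definition is_orientation :: "(white \<Rightarrow> 'e \<Rightarrow> white \<Rightarrow> bool) \<Rightarrow> (white \<Rightarrow> 'e \<Rightarrow> white \<Rightarrow> bool) \<Rightarrow> bool" where
  "is_orientation adj Or \<longleftrightarrow>
     (\<forall>u e v. Or u e v \<longrightarrow> adj u e v) \<and>
     (\<forall>u e v. adj u e v \<longrightarrow> Or u e v \<or> Or v e u) \<and>
     (\<forall>u e v. \<not> (Or u e v \<and> Or v e u))"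

definition oriented_towards_ends :: "(white \<Rightarrow> 'e \<Rightarrow> white \<Rightarrow> bool) \<Rightarrow> (white \<Rightarrow> 'e \<Rightarrow> white \<Rightarrow> bool) \<Rightarrow> bool" where
  "oriented_towards_ends adj Or \<longleftrightarrow> is_orientation adj Or \<and>
     (\<forall>w. \<exists>r rs. is_ray adj r rs \<and> connected_in adj w (r 0) \<and>
        (\<forall>u e v. connected_in adj w u \<and> adj u e v \<longrightarrow>
           (Or u e v \<longleftrightarrow> (\<exists>y ys. is_ray adj y ys \<and> y 0 = u \<and> ys 0 = e \<and> y 1 = v \<and> same_end y r))))"

definition M_of :: "(face \<Rightarrow> complex) \<Rightarrow> (white \<Rightarrow> complex \<times> complex \<Rightarrow> white \<Rightarrow> bool) \<Rightarrow>
    white \<Rightarrow> black \<Rightarrow> bool" where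
  "M_of \<psi> Or w b \<longleftrightarrow> hex_adj w b \<and> (\<exists>!p. Or w (fst p) (snd p)) \<and>
     (\<exists>e w'. Or w e w' \<and> edge_on_seg \<psi> e b)"

definition perfect_matching :: "(white \<Rightarrow> black \<Rightarrow> bool) \<Rightarrow> bool" where
  "perfect_matching M \<longleftrightarrow> (\<forall>w b. M w b \<longrightarrow> hex_adj w b) \<and>
     (\<forall>w. \<exists>!b. M w b) \<and> (\<forall>b. \<exists>!w. M w b)"

end

theory Submission
  imports Defs
begin

text \<open>Orienting every component of the dual forest towards its end gives each white
  face exactly one outgoing dual edge; it crosses a segment \<open>\<psi> b\<close>, and the two faces on
  either side of that edge are both adjacent to \<open>b\<close> in H, which determines \<open>b\<close>.
  Conversely, each segment \<open>\<psi> b\<close> contains exactly one vertex \<open>p\<close> of \<open>T\<close> in its interior;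
  the forest uses one of the two edges from \<open>p\<close> along \<open>\<psi> b\<close>, so the other one is crossed
  by the dual forest. All faces along that edge are pairwise dual-adjacent, and since an
  orientation towards an end has out-degree one and no directed cycles, exactly one of them
  leaves through it.\<close>

lemma hex_adj_common_black_unique:
  assumes "hex_adj w b" "hex_adj w b'" "hex_adj v b" "hex_adj v b'" "w \<noteq> v"
  shows "b = b'"
  using assms unfolding hex_adj_def
  by (cases w; cases v; cases b; cases b') auto

section \<open>Segments and faces of a T-graph\<close>

lemma convex_hull_collinear_triple:
  fixes a b c :: "'a::real_vector"
  assumes "c \<in> closed_segment a b"
  shows "convex hull {a, b, c} = closed_segment a b"
proof
  show "convex hull {a, b, c} \<subseteq> closed_segment a b"
    by (rule hull_minimal) (use assms in auto)
  show "closed_segment a b \<subseteq> convex hull {a, b, c}"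
    unfolding segment_convex_hull by (rule hull_mono) auto
qed

lemma seg_collinear_cases:
  assumes "collinear (\<psi> ` bfaces (i, j))"
  obtains
    "\<psi> (i, j) \<in> closed_segment (\<psi> (i + 1, j)) (\<psi> (i, j + 1))"
    "seg \<psi> (i, j) = closed_segment (\<psi> (i + 1, j)) (\<psi> (i, j + 1))"
  | "\<psi> (i + 1, j) \<in> closed_segment (\<psi> (i, j + 1)) (\<psi> (i, j))"
    "seg \<psi> (i, j) = closed_segment (\<psi> (i, j + 1)) (\<psi> (i, j))"
  | "\<psi> (i, j + 1) \<in> closed_segment (\<psi> (i, j)) (\<psi> (i + 1, j))"
    "seg \<psi> (i, j) = closed_segment (\<psi> (i, j)) (\<psi> (i + 1, j))"
proof -
  let ?A = "\<psi> (i, j)" and ?B = "\<psi> (i + 1, j)" and ?C = "\<psi> (i, j + 1)"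
  have hull: "seg \<psi> (i, j) = convex hull {?A, ?B, ?C}"
    by (simp add: seg_def bfaces_def)
  have "collinear {?A, ?B, ?C}"
    using assms by (simp add: bfaces_def)
  then consider "?A \<in> closed_segment ?B ?C" | "?B \<in> closed_segment ?C ?A"
    | "?C \<in> closed_segment ?A ?B"
    by (auto simp: collinear_between_cases between_mem_segment)
  then show thesis
    using that convex_hull_collinear_triple[of ?A ?B ?C] convex_hull_collinear_triple[of ?B ?C ?A]
      convex_hull_collinear_triple[of ?C ?A ?B] hull
    by cases (simp_all add: insert_commute)
qed

lemma seg_boundary_two_points:
  assumes "collinear (\<psi> ` bfaces b)"
  obtains X Y where "seg \<psi> b - rel_interior (seg \<psi> b) \<subseteq> {X, Y}"
proof -
  have boundary: "closed_segment X Y - rel_interior (closed_segment X Y) \<subseteq> {X, Y}"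
    for X Y :: complex
    by (auto simp: rel_interior_closed_segment open_segment_def)
  obtain i j where b: "b = (i, j)" by fastforce
  from assms show thesis
    unfolding b by (cases rule: seg_collinear_cases) (use that[unfolded b] boundary in metis)+
qed

lemma edge_on_seg_if_T_edge:
  assumes "fst e \<in> rel_interior (seg \<psi> b)" "snd e \<in> seg \<psi> b - rel_interior (seg \<psi> b)"
  shows "edge_on_seg \<psi> e b"
  using assms rel_interior_subset[of "seg \<psi> b"] unfolding edge_on_seg_def seg_def
  by (intro closed_segment_subset convex_convex_hull) auto

lemma bfaces_sides_frontier_tri:
  shows "closed_segment (\<psi> (i, j)) (\<psi> (i + 1, j)) \<subseteq> frontier (tri \<psi> (i, j - 1))"
    and "closed_segment (\<psi> (i, j)) (\<psi> (i, j + 1)) \<subseteq> frontier (tri \<psi> (i - 1, j))"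
    and "closed_segment (\<psi> (i + 1, j)) (\<psi> (i, j + 1)) \<subseteq> frontier (tri \<psi> (i, j))"
  by (auto simp: tri_def wfaces_def frontier_of_triangle closed_segment_commute)

lemma segment_from_interior_point_on_side:
  fixes X Y Z p q :: "'a::euclidean_space"
  assumes "Z \<in> closed_segment X Y" "p \<in> open_segment X Y" "q \<in> {X, Y}"
    and "Z \<in> open_segment X Y \<Longrightarrow> Z = p"
  shows "closed_segment p q \<subseteq> closed_segment X Y"
    and "closed_segment p q \<subseteq> closed_segment X Z \<or> closed_segment p q \<subseteq> closed_segment Z Y"
proof -
  have "p \<in> closed_segment X Y"
    using assms(2) by (simp add: open_segment_def)
  then show pq: "closed_segment p q \<subseteq> closed_segment X Y"
    using assms(3) by (auto simp: subset_closed_segment)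
  show "closed_segment p q \<subseteq> closed_segment X Z \<or> closed_segment p q \<subseteq> closed_segment Z Y"
  proof (cases "Z \<in> open_segment X Y")
    case True
    then show ?thesis
      using assms(3,4) by (auto simp: closed_segment_commute)
  next
    case False
    then have "Z = X \<or> Z = Y"
      using assms(1) by (auto simp: open_segment_def)
    then show ?thesis using pq by auto
  qed
qed

section \<open>Rays and ends\<close>

lemma is_ray_shift: "is_ray adj y ys \<Longrightarrow> is_ray adj (\<lambda>k. y (n + k)) (\<lambda>k. ys (n + k))"
  unfolding is_ray_def inj_def by (simp (no_asm_simp)) (metis add_Suc_right add_left_cancel)

lemma is_ray_prepend:
  assumes "is_ray adj y ys" "x \<notin> range y" "adj x e (y 0)"
  shows "is_ray adj (case_nat x y) (case_nat e ys)"
  unfolding is_ray_def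
proof
  show "inj (case_nat x y)"
  proof (rule injI)
    fix a b assume "case_nat x y a = case_nat x y b"
    then show "a = b"
      using assms(1,2) unfolding is_ray_def by (cases a; cases b) (auto dest: injD)
  qed
  show "\<forall>k. adj (case_nat x y k) (case_nat e ys k) (case_nat x y (Suc k))"
    using assms(1,3) unfolding is_ray_def by (simp split: nat.split)
qed

lemma same_end_refl: "same_end r r"
  unfolding same_end_def by (metis add_0)

lemma same_end_shift:
  assumes "same_end y r"
  shows "same_end (\<lambda>k. y (n + k)) r"
proof -
  obtain i j where tail: "\<forall>k. y (i + k) = r (j + k)"
    using assms by (auto simp: same_end_def)
  show ?thesis
  proof (cases "n \<le> i")
    case True
    then have "\<forall>k. y (n + (i - n + k)) = r (j + k)"
      using tail by simp
    then show ?thesis unfolding same_end_def by blast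
  next
    case False
    then have "\<forall>k. y (n + (0 + k)) = r (j + (n - i) + k)"
      using tail[rule_format, of "n - i + k" for k] by (simp add: add.assoc)
    then show ?thesis unfolding same_end_def by blast
  qed
qed

lemma same_end_prepend: "same_end y r \<Longrightarrow> same_end (case_nat x y) r"
  unfolding same_end_def by (metis add_Suc nat.simps(5))

lemma same_end_common_tail:
  assumes "same_end y r" "same_end y' r"
  obtains i j where "\<forall>k. y (i + k) = y' (j + k)"
proof -
  obtain a c where y: "\<forall>k. y (a + k) = r (c + k)"
    using assms(1) by (auto simp: same_end_def)
  obtain a' c' where y': "\<forall>k. y' (a' + k) = r (c' + k)"
    using assms(2) by (auto simp: same_end_def)
  define m where "m = max c c'"
  have "y (a + (m - c) + k) = y' (a' + (m - c') + k)" for k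
    using y[rule_format, of "m - c + k"] y'[rule_format, of "m - c' + k"]
    by (simp add: m_def add.assoc)
  then show thesis using that by blast
qed

lemma connected_in_refl: "connected_in adj w w"
  unfolding connected_in_def by simp

lemma connected_in_step: "connected_in adj w u \<Longrightarrow> adj u e v \<Longrightarrow> connected_in adj w v"
  unfolding connected_in_def by (rule rtrancl_into_rtrancl) auto

lemma connected_in_ray:
  "connected_in adj w (y 0) \<Longrightarrow> is_ray adj y ys \<Longrightarrow> connected_in adj w (y k)"
  by (induction k) (auto simp: is_ray_def intro: connected_in_step)

lemma ray_to_same_end:
  assumes "is_ray adj r rs" "connected_in adj x (r 0)"
  obtains y ys where "is_ray adj y ys" "y 0 = x" "same_end y r"
proof -
  have "\<exists>y ys. is_ray adj y ys \<and> y 0 = x \<and> same_end y r"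
    using assms(2)[unfolded connected_in_def]
  proof (induction rule: converse_rtrancl_induct)
    case base
    then show ?case using assms(1) same_end_refl by blast
  next
    case (step x x')
    then obtain e where e: "adj x e x'" by auto
    obtain y ys where y: "is_ray adj y ys" "y 0 = x'" "same_end y r"
      using step.IH by blast
    show ?case
    proof (cases "x \<in> range y")
      case True
      then obtain n where "x = y n" by auto
      then show ?thesis
        using is_ray_shift[OF y(1), of n] same_end_shift[OF y(3), of n] by force
    next
      case False
      then show ?thesis
        using is_ray_prepend[OF y(1) False, of e] e y(2) same_end_prepend[OF y(3), of x]
        by (intro exI[of _ "case_nat x y"] exI[of _ "case_nat e ys"]) auto
    qed
  qed
  then show thesis using that by blast
qed

section \<open>Orientations towards an end\<close>

lemma is_orientation_adj: "is_orientation adj Or \<Longrightarrow> Or u e v \<Longrightarrow> adj u e v"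
  unfolding is_orientation_def by blast

lemma is_orientation_total: "is_orientation adj Or \<Longrightarrow> adj u e v \<Longrightarrow> Or u e v \<or> Or v e u"
  unfolding is_orientation_def by blast

lemma is_orientation_antisym: "is_orientation adj Or \<Longrightarrow> Or u e v \<Longrightarrow> Or v e u \<Longrightarrow> False"
  unfolding is_orientation_def by blast

locale end_orientation =
  fixes adj :: "white \<Rightarrow> 'e \<Rightarrow> white \<Rightarrow> bool" and Or :: "white \<Rightarrow> 'e \<Rightarrow> white \<Rightarrow> bool"
    and w :: white and r :: "nat \<Rightarrow> white" and rs :: "nat \<Rightarrow> 'e"
  assumes adj_sym: "adj u e v \<Longrightarrow> adj v e u"
    and orientation: "is_orientation adj Or"
    and ray: "is_ray adj r rs"
    and reaches_ray: "connected_in adj w (r 0)"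
    and Or_iff_ray: "connected_in adj w u \<Longrightarrow> adj u e v \<Longrightarrow>
      Or u e v \<longleftrightarrow> (\<exists>y ys. is_ray adj y ys \<and> y 0 = u \<and> ys 0 = e \<and> y 1 = v \<and> same_end y r)"
begin

lemma Or_along_ray:
  assumes "is_ray adj y ys" "same_end y r" "connected_in adj w (y 0)"
  shows "Or (y k) (ys k) (y (Suc k))"
proof -
  have "adj (y k) (ys k) (y (Suc k))"
    using assms(1) by (simp add: is_ray_def)
  with connected_in_ray[OF assms(3,1)] show ?thesis
    using is_ray_shift[OF assms(1), of k] same_end_shift[OF assms(2), of k]
    by (subst Or_iff_ray) (auto intro!: exI[of _ "\<lambda>t. y (k + t)"] exI[of _ "\<lambda>t. ys (k + t)"])
qed

lemma out_neighbour_on_ray: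
  assumes "is_ray adj y ys" "same_end y r" "connected_in adj w (y 0)" "Or (y 0) e v"
  shows "v \<in> range y"
proof (rule ccontr)
  assume off: "v \<notin> range y"
  have edge: "adj v e (y 0)"
    using adj_sym is_orientation_adj[OF orientation assms(4)] .
  have "Or v e (y 0)"
    using is_ray_prepend[OF assms(1) off edge] same_end_prepend[OF assms(2), of v]
      connected_in_step[OF assms(3) is_orientation_adj[OF orientation assms(4)]] edge
    by (subst Or_iff_ray) (auto intro!: exI[of _ "case_nat v y"] exI[of _ "case_nat e ys"])
  then show False
    using is_orientation_antisym[OF orientation assms(4)] by blast
qed

text \<open>Induction on the index at which \<open>y\<close> joins the common tail. The second vertex of each
  ray lies on the other ray (otherwise prepending it would orient the first edge backwards),
  so \<open>y 1 = y' k\<close>, the tails from there agree by induction, and \<open>y' 1 = y l\<close> then forces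
  \<open>k = 1\<close>.\<close>

lemma rays_to_end_eq:
  assumes "is_ray adj y ys" "is_ray adj y' ys'" "y 0 = y' 0" "connected_in adj w (y 0)"
    "same_end y r" "same_end y' r" "\<forall>k. y (i + k) = y' (j + k)"
  shows "y = y'"
  using assms
proof (induction i arbitrary: j y ys y' ys')
  case 0
  then have "y' j = y' 0" by (metis add_0 add.right_neutral)
  then have "j = 0"
    using "0.prems"(2) by (auto simp: is_ray_def dest: injD)
  then show ?case using "0.prems"(7) by auto
next
  case (Suc i)
  have inj: "inj y" "inj y'"
    using Suc.prems(1,2) by (auto simp: is_ray_def)
  have conn': "connected_in adj w (y' 0)"
    using Suc.prems(3,4) by simp
  have "y 1 \<in> range y'"
    using out_neighbour_on_ray[OF Suc.prems(2,6) conn'] Or_along_ray[OF Suc.prems(1,5,4), of 0]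
      Suc.prems(3) by simp
  then obtain k where k: "y 1 = y' k" by auto
  have "y' 1 \<in> range y"
    using out_neighbour_on_ray[OF Suc.prems(1,5,4)] Or_along_ray[OF Suc.prems(2,6) conn', of 0]
      Suc.prems(3) by simp
  then obtain l where l: "y' 1 = y l" by auto
  have "k \<noteq> 0" "l \<noteq> 0"
    using k l Suc.prems(3) inj by (metis injD one_neq_zero)+
  have "k \<le> j"
  proof (rule ccontr)
    assume "\<not> k \<le> j"
    then have "y 1 = y (Suc i + (k - j))"
      using k Suc.prems(7)[rule_format, of "k - j"] by simp
    then have "1 = Suc i + (k - j)" using injD[OF inj(1)] by blast
    then show False using \<open>\<not> k \<le> j\<close> by simp
  qed
  have tails: "(\<lambda>t. y (1 + t)) = (\<lambda>t. y' (k + t))"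
  proof (rule Suc.IH)
    show "is_ray adj (\<lambda>t. y (1 + t)) (\<lambda>t. ys (1 + t))"
      by (rule is_ray_shift[OF Suc.prems(1)])
    show "is_ray adj (\<lambda>t. y' (k + t)) (\<lambda>t. ys' (k + t))"
      by (rule is_ray_shift[OF Suc.prems(2)])
    show "same_end (\<lambda>t. y (1 + t)) r" "same_end (\<lambda>t. y' (k + t)) r"
      by (rule same_end_shift[OF Suc.prems(5)], rule same_end_shift[OF Suc.prems(6)])
    show "connected_in adj w (y (1 + 0))"
      by (rule connected_in_ray[OF Suc.prems(4,1)])
    show "y (1 + 0) = y' (k + 0)" "\<forall>m. y (1 + (i + m)) = y' (k + (j - k + m))"
      using k Suc.prems(7) \<open>k \<le> j\<close> by simp_all
  qed
  have "y' 1 = y' (k + (l - 1))"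
    using l fun_cong[OF tails, of "l - 1"] \<open>l \<noteq> 0\<close> by simp
  then have "k = 1"
    using injD[OF inj(2)] \<open>k \<noteq> 0\<close> by fastforce
  show "y = y'"
  proof
    fix t show "y t = y' t"
      using Suc.prems(3) fun_cong[OF tails, of "t - 1"] \<open>k = 1\<close> by (cases t) auto
  qed
qed

lemma out_neighbour_unique:
  assumes "connected_in adj w u" "Or u e1 v1" "Or u e2 v2"
  shows "v1 = v2"
proof -
  obtain y ys where y: "is_ray adj y ys" "y 0 = u" "y 1 = v1" "same_end y r"
    using Or_iff_ray[OF assms(1) is_orientation_adj[OF orientation assms(2)]] assms(2) by blast
  obtain y' ys' where y': "is_ray adj y' ys'" "y' 0 = u" "y' 1 = v2" "same_end y' r"
    using Or_iff_ray[OF assms(1) is_orientation_adj[OF orientation assms(3)]] assms(3) by blast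
  obtain i j where "\<forall>k. y (i + k) = y' (j + k)"
    using same_end_common_tail[OF y(4) y'(4)] .
  then have "y = y'"
    by (intro rays_to_end_eq[OF y(1) y'(1) _ _ y(4) y'(4)]) (use y y' assms(1) in auto)
  then show ?thesis using y y' by simp
qed

lemma out_edge_exists: "\<exists>e v. Or w e v"
proof -
  obtain y ys where y: "is_ray adj y ys" "y 0 = w" "same_end y r"
    using ray_to_same_end[OF ray reaches_ray] .
  then have "Or (y 0) (ys 0) (y 1)"
    using Or_along_ray[of y ys 0] connected_in_refl[of adj w] by simp
  then show ?thesis using y(2) by blast
qed

lemma no_directed_triangle:
  assumes "connected_in adj w a" "Or a e1 b" "Or b e2 c" "Or c e3 a"
  shows False
proof -
  obtain y ys where y: "is_ray adj y ys" "y 0 = a" "y 1 = b" "same_end y r"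
    using Or_iff_ray[OF assms(1) is_orientation_adj[OF orientation assms(2)]] assms(2) by blast
  have conn_y: "connected_in adj w (y k)" for k
    using connected_in_ray[of adj w y ys k] assms(1) y by simp
  have "y 2 = c"
    using out_neighbour_unique[OF conn_y Or_along_ray[OF y(1,4), of 1]] assms(3) y(3)
      assms(1) y(2) by (simp add: numeral_2_eq_2)
  then have "y 3 = a"
    using out_neighbour_unique[OF conn_y Or_along_ray[OF y(1,4), of 2]] assms(4)
      assms(1) y(2) by (simp add: numeral_3_eq_3 numeral_2_eq_2)
  with y(1,2) show False
    unfolding is_ray_def by (metis injD zero_neq_numeral)
qed

end

lemma end_orientation_exists:
  assumes "oriented_towards_ends adj Or" "\<And>u e v. adj u e v \<Longrightarrow> adj v e u"
  obtains r rs where "end_orientation adj Or w r rs"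
  using assms unfolding oriented_towards_ends_def end_orientation_def by metis

section \<open>Spanning forests of a non-degenerate T-graph\<close>

lemma dual_adj_sym: "dual_adj \<psi> F u e v \<Longrightarrow> dual_adj \<psi> F v e u"
  by (auto simp: dual_adj_def)

locale T_graph_forest =
  fixes \<psi> :: "face \<Rightarrow> complex" and F :: "(complex \<times> complex) set"
    and Or :: "white \<Rightarrow> complex \<times> complex \<Rightarrow> white \<Rightarrow> bool"
  assumes T_graph: "is_Tgraph \<psi>" and nondeg: "nondegenerate \<psi>"
    and forest: "spanning_forest \<psi> F"
    and towards_ends: "oriented_towards_ends (dual_adj \<psi> F) Or"
begin

lemma collinear_bfaces: "collinear (\<psi> ` bfaces b)"
  using T_graph[unfolded is_Tgraph_def, THEN conjunct1] by blast

lemma hex_adj_if_edge: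
  "T_edge \<psi> e \<Longrightarrow> edge_on_seg \<psi> e b \<Longrightarrow> edge_on_face \<psi> e w \<Longrightarrow> hex_adj w b"
  using T_graph[unfolded is_Tgraph_def, THEN conjunct2, THEN conjunct2, THEN conjunct2,
      THEN conjunct2] by blast

lemma forest_out_edge: "v \<in> Tverts \<psi> \<Longrightarrow> \<exists>!q. (v, q) \<in> F"
  using forest[unfolded spanning_forest_def, THEN conjunct2, THEN conjunct1] by blast

lemma forest_T_edge: "e \<in> F \<Longrightarrow> T_edge \<psi> e"
  using forest[unfolded spanning_forest_def, THEN conjunct1] by blast

lemma interior_vertex: obtains p where "Tverts \<psi> \<inter> rel_interior (seg \<psi> b) = {p}"
proof -
  have "card (Tverts \<psi> \<inter> rel_interior (seg \<psi> b)) = 1"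
    using nondeg[unfolded nondegenerate_def, THEN conjunct2, THEN conjunct2] by blast
  then show thesis using that by (rule card_1_singletonE)
qed

lemma seg_of_interior_vertex_unique:
  assumes "p \<in> Tverts \<psi>" "p \<in> rel_interior (seg \<psi> b)" "p \<in> rel_interior (seg \<psi> b')"
  shows "b = b'"
proof -
  have "card {b. p \<in> rel_interior (seg \<psi> b)} = 1"
    using nondeg[unfolded nondegenerate_def, THEN conjunct1] assms(1) by blast
  then obtain c where "{b. p \<in> rel_interior (seg \<psi> b)} = {c}"
    by (rule card_1_singletonE)
  with assms(2,3) show ?thesis by (metis mem_Collect_eq singletonD)
qed

lemma forest_edge_along_seg:
  assumes "p \<in> Tverts \<psi>" "p \<in> rel_interior (seg \<psi> b)" "(p, q) \<in> F"
  shows "q \<in> seg \<psi> b - rel_interior (seg \<psi> b)"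
proof -
  obtain b' where b': "p \<in> rel_interior (seg \<psi> b')" "q \<in> seg \<psi> b' - rel_interior (seg \<psi> b')"
    using forest_T_edge[OF assms(3)] by (auto simp: T_edge_def)
  with seg_of_interior_vertex_unique[OF assms(1,2) b'(1)] show ?thesis by simp
qed

text \<open>An edge of \<open>T\<close> on the boundary of two faces runs along the segment it was defined
  by, since both faces are adjacent to the corresponding black vertex.\<close>

lemma T_edge_on_seg_between_faces:
  assumes "T_edge \<psi> e" "edge_on_seg \<psi> e b" "edge_on_face \<psi> e w" "edge_on_face \<psi> e w'"
    "w \<noteq> w'"
  shows "fst e \<in> rel_interior (seg \<psi> b)" "snd e \<in> seg \<psi> b - rel_interior (seg \<psi> b)"
proof -
  obtain b' where b': "fst e \<in> rel_interior (seg \<psi> b')" "snd e \<in> seg \<psi> b' - rel_interior (seg \<psi> b')"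
    using assms(1) by (auto simp: T_edge_def)
  have on_b': "edge_on_seg \<psi> e b'" by (rule edge_on_seg_if_T_edge[OF b'])
  have "b' = b"
    using hex_adj_common_black_unique[OF hex_adj_if_edge[OF assms(1) on_b' assms(3)]
        hex_adj_if_edge[OF assms(1,2,3)] hex_adj_if_edge[OF assms(1) on_b' assms(4)]
        hex_adj_if_edge[OF assms(1,2,4)] assms(5)] .
  with b' show "fst e \<in> rel_interior (seg \<psi> b)" "snd e \<in> seg \<psi> b - rel_interior (seg \<psi> b)"
    by simp_all
qed

text \<open>Of the two edges of \<open>T\<close> from the interior vertex of a segment to its endpoints, one
  belongs to the forest.\<close>

lemma non_forest_edge_of_seg_unique:
  assumes "T_edge \<psi> e1" "e1 \<notin> F"
    "fst e1 \<in> rel_interior (seg \<psi> b)" "snd e1 \<in> seg \<psi> b - rel_interior (seg \<psi> b)"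
    and "T_edge \<psi> e2" "e2 \<notin> F"
    "fst e2 \<in> rel_interior (seg \<psi> b)" "snd e2 \<in> seg \<psi> b - rel_interior (seg \<psi> b)"
  shows "e1 = e2"
proof -
  have vertices: "fst e1 \<in> Tverts \<psi>" "fst e2 \<in> Tverts \<psi>"
    using assms(1,5) by (auto simp: T_edge_def)
  obtain p where "Tverts \<psi> \<inter> rel_interior (seg \<psi> b) = {p}"
    by (rule interior_vertex)
  then have p: "fst e1 = p" "fst e2 = p"
    using vertices assms(3,7) by auto
  obtain q where q: "(p, q) \<in> F"
    using forest_out_edge vertices p by metis
  obtain X Y where XY: "seg \<psi> b - rel_interior (seg \<psi> b) \<subseteq> {X, Y}"
    by (rule seg_boundary_two_points[OF collinear_bfaces])
  have "q \<in> seg \<psi> b - rel_interior (seg \<psi> b)"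
    using forest_edge_along_seg[of p b q] vertices p assms(3) q by simp
  then have "q \<in> {X, Y}" using XY by blast
  moreover have "snd e1 \<noteq> q" "snd e2 \<noteq> q"
    using assms(2,6) q p by (cases e1, cases e2, auto)+
  ultimately have "snd e1 = snd e2"
    using assms(4,8) XY by blast
  with p show ?thesis by (simp add: prod_eq_iff)
qed

lemma dual_adj_edge_unique:
  assumes "dual_adj \<psi> F u e1 v" "dual_adj \<psi> F u e2 v"
  shows "e1 = e2"
proof -
  obtain b1 where b1: "fst e1 \<in> rel_interior (seg \<psi> b1)" "snd e1 \<in> seg \<psi> b1 - rel_interior (seg \<psi> b1)"
    using assms(1) by (auto simp: dual_adj_def T_edge_def)
  obtain b2 where b2: "fst e2 \<in> rel_interior (seg \<psi> b2)" "snd e2 \<in> seg \<psi> b2 - rel_interior (seg \<psi> b2)"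
    using assms(2) by (auto simp: dual_adj_def T_edge_def)
  have e1: "T_edge \<psi> e1" "e1 \<notin> F" "u \<noteq> v" "edge_on_face \<psi> e1 u" "edge_on_face \<psi> e1 v"
    and e2: "T_edge \<psi> e2" "e2 \<notin> F" "edge_on_face \<psi> e2 u" "edge_on_face \<psi> e2 v"
    using assms by (auto simp: dual_adj_def)
  note on_seg = edge_on_seg_if_T_edge[OF b1] edge_on_seg_if_T_edge[OF b2]
  have "b1 = b2"
    using hex_adj_common_black_unique[OF hex_adj_if_edge[OF e1(1) on_seg(1) e1(4)]
        hex_adj_if_edge[OF e2(1) on_seg(2) e2(3)] hex_adj_if_edge[OF e1(1) on_seg(1) e1(5)]
        hex_adj_if_edge[OF e2(1) on_seg(2) e2(4)] e1(3)] .
  with b1 b2 show ?thesis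
    using non_forest_edge_of_seg_unique[OF e1(1,2) _ _ e2(1,2)] by simp
qed

lemma non_forest_edge_of_seg:
  assumes "seg \<psi> b = closed_segment X Y" "X \<in> Tverts \<psi>" "Y \<in> Tverts \<psi>"
  obtains p q where "Tverts \<psi> \<inter> open_segment X Y = {p}" "q \<in> {X, Y}"
    "T_edge \<psi> (p, q)" "(p, q) \<notin> F"
proof -
  obtain p where p: "Tverts \<psi> \<inter> rel_interior (seg \<psi> b) = {p}"
    by (rule interior_vertex)
  then have pT: "p \<in> Tverts \<psi>" and p_int: "p \<in> rel_interior (seg \<psi> b)" by auto
  obtain q where q: "(p, q) \<in> F"
    using forest_out_edge[OF pT] by blast
  have q_end: "q \<in> seg \<psi> b - rel_interior (seg \<psi> b)"
    by (rule forest_edge_along_seg[OF pT p_int q])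
  then have "X \<noteq> Y"
    using assms(1) by (auto simp: rel_interior_closed_segment)
  then have int: "rel_interior (seg \<psi> b) = open_segment X Y"
    using assms(1) by (simp add: rel_interior_closed_segment)
  define q' where "q' = (if q = X then Y else X)"
  have "q \<in> {X, Y}"
    using q_end int assms(1) by (auto simp: open_segment_def)
  then have q': "q' \<in> {X, Y}" "q' \<noteq> q"
    using \<open>X \<noteq> Y\<close> by (auto simp: q'_def)
  have "q' \<in> Tverts \<psi>" "q' \<in> seg \<psi> b - rel_interior (seg \<psi> b)"
    using q'(1) assms int by (auto simp: open_segment_def)
  then have "T_edge \<psi> (p, q')"
    using pT p_int unfolding T_edge_def fst_conv snd_conv by blast
  moreover have "(p, q') \<notin> F"
    using forest_out_edge[OF pT] q q' by auto
  ultimately show thesis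
    using that p int q'(1) by simp
qed

text \<open>\<open>X Z Y\<close> is the degenerate triangle \<open>\<psi> b\<close>, with faces on its three sides. The
  non-forest edge from the interior vertex \<open>p\<close> lies on the side \<open>[X, Y]\<close> and on one of
  \<open>[X, Z]\<close>, \<open>[Z, Y]\<close>, because \<open>Z\<close>, being a vertex, is an endpoint or equal to \<open>p\<close>.\<close>

lemma dual_edge_crossing_seg_with_sides:
  assumes "Z \<in> closed_segment X Y" "seg \<psi> b = closed_segment X Y"
    "X \<in> Tverts \<psi>" "Y \<in> Tverts \<psi>" "Z \<in> Tverts \<psi>"
    "closed_segment X Y \<subseteq> frontier (tri \<psi> wXY)"
    "closed_segment X Z \<subseteq> frontier (tri \<psi> wXZ)"
    "closed_segment Z Y \<subseteq> frontier (tri \<psi> wZY)" "wXY \<noteq> wXZ" "wXY \<noteq> wZY"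
  shows "\<exists>e w w'. dual_adj \<psi> F w e w' \<and> edge_on_seg \<psi> e b"
proof -
  obtain p q where p: "Tverts \<psi> \<inter> open_segment X Y = {p}" and q: "q \<in> {X, Y}"
    and e: "T_edge \<psi> (p, q)" "(p, q) \<notin> F"
    using non_forest_edge_of_seg[OF assms(2-4)] .
  have p_open: "p \<in> open_segment X Y"
    using p by auto
  have "Z = p" if "Z \<in> open_segment X Y"
    using p that assms(5) by auto
  note sides = segment_from_interior_point_on_side[OF assms(1) p_open q this]
  have "edge_on_seg \<psi> (p, q) b"
    using sides(1) assms(2) by (simp add: edge_on_seg_def)
  moreover have "edge_on_face \<psi> (p, q) wXY"
    and "edge_on_face \<psi> (p, q) wXZ \<or> edge_on_face \<psi> (p, q) wZY"
    using sides assms(6-8) by (auto simp: edge_on_face_def)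
  ultimately show ?thesis
    using e assms(9,10) unfolding dual_adj_def by blast
qed

lemma dual_edge_crossing_seg: "\<exists>e w w'. dual_adj \<psi> F w e w' \<and> edge_on_seg \<psi> e b"
proof -
  obtain i j where b: "b = (i, j)" by fastforce
  note faces = bfaces_sides_frontier_tri[of \<psi> i j]
  from collinear_bfaces[of "(i, j)"]
  have "\<exists>e w w'. dual_adj \<psi> F w e w' \<and> edge_on_seg \<psi> e (i, j)"
  proof (cases rule: seg_collinear_cases)
    case 1
    show ?thesis
      by (rule dual_edge_crossing_seg_with_sides[OF 1,
            where wXY = "(i, j)" and wXZ = "(i, j - 1)" and wZY = "(i - 1, j)"])
        (use faces in \<open>auto simp: Tverts_def closed_segment_commute\<close>)
  next
    case 2
    show ?thesis
      by (rule dual_edge_crossing_seg_with_sides[OF 2,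
            where wXY = "(i - 1, j)" and wXZ = "(i, j)" and wZY = "(i, j - 1)"])
        (use faces in \<open>auto simp: Tverts_def closed_segment_commute\<close>)
  next
    case 3
    show ?thesis
      by (rule dual_edge_crossing_seg_with_sides[OF 3,
            where wXY = "(i, j - 1)" and wXZ = "(i - 1, j)" and wZY = "(i, j)"])
        (use faces in \<open>auto simp: Tverts_def closed_segment_commute\<close>)
  qed
  with b show ?thesis by simp
qed

lemma end_orientation_at: obtains r rs where "end_orientation (dual_adj \<psi> F) Or w r rs"
  using end_orientation_exists[OF towards_ends dual_adj_sym] .

lemma orientation: "is_orientation (dual_adj \<psi> F) Or"
  using towards_ends unfolding oriented_towards_ends_def by blast

lemma out_edge_exists: "\<exists>e v. Or w e v"
proof -
  obtain r rs where "end_orientation (dual_adj \<psi> F) Or w r rs"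
    by (rule end_orientation_at)
  then show ?thesis by (rule end_orientation.out_edge_exists)
qed

lemma out_edge_unique:
  assumes "Or w e1 v1" "Or w e2 v2"
  shows "e1 = e2" "v1 = v2"
proof -
  obtain r rs where orient_w: "end_orientation (dual_adj \<psi> F) Or w r rs"
    by (rule end_orientation_at)
  show "v1 = v2"
    by (rule end_orientation.out_neighbour_unique[OF orient_w connected_in_refl assms])
  then show "e1 = e2"
    using dual_adj_edge_unique is_orientation_adj[OF orientation assms(1)]
      is_orientation_adj[OF orientation assms(2)] by blast
qed

lemma no_directed_triangle:
  assumes "Or a e1 b" "Or b e2 c" "Or c e3 a"
  shows False
proof -
  obtain r rs where orient_a: "end_orientation (dual_adj \<psi> F) Or a r rs"
    by (rule end_orientation_at)
  show False
    by (rule end_orientation.no_directed_triangle[OF orient_a connected_in_refl assms])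
qed

text \<open>All faces containing an edge \<open>e \<notin> F\<close> are pairwise dual-adjacent through \<open>e\<close>, so
  if two of them left through \<open>e\<close> the orientation would contain a directed cycle of length
  two or three.\<close>

lemma not_Or_between_leaving_faces:
  assumes "Or u e u'" "Or x e x'" "Or u e x"
  shows False
proof -
  have adj: "dual_adj \<psi> F u e u'" "dual_adj \<psi> F x e x'"
    using assms(1,2) is_orientation_adj[OF orientation] by blast+
  have "x = u'"
    by (rule out_edge_unique(2)[OF assms(3,1)])
  have "x' \<noteq> u"
    using assms(2,3) is_orientation_antisym[OF orientation] by blast
  then have "dual_adj \<psi> F u e x'"
    using adj by (auto simp: dual_adj_def)
  then consider "Or u e x'" | "Or x' e u"
    using is_orientation_total[OF orientation] by blast
  then show False
  proof cases
    case 1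
    then show False
      using out_edge_unique(2)[OF 1 assms(1)] \<open>x = u'\<close> adj(2) by (simp add: dual_adj_def)
  next
    case 2
    then show False
      using no_directed_triangle assms(2,3) by blast
  qed
qed

lemma leaving_face_unique:
  assumes "Or w1 e v1" "Or w2 e v2"
  shows "w1 = w2"
proof (rule ccontr)
  assume "w1 \<noteq> w2"
  then have "dual_adj \<psi> F w1 e w2"
    using assms is_orientation_adj[OF orientation] by (auto simp: dual_adj_def)
  then consider "Or w1 e w2" | "Or w2 e w1"
    using is_orientation_total[OF orientation] by blast
  then show False
    using not_Or_between_leaving_faces assms by cases blast+
qed

lemma out_edges_on_seg_eq:
  assumes "Or w1 e1 v1" "edge_on_seg \<psi> e1 b" "Or w2 e2 v2" "edge_on_seg \<psi> e2 b"
  shows "e1 = e2"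
proof -
  have adj: "dual_adj \<psi> F w1 e1 v1" "dual_adj \<psi> F w2 e2 v2"
    using assms(1,3) is_orientation_adj[OF orientation] by blast+
  then show ?thesis
    using T_edge_on_seg_between_faces[of e1 b w1 v1] T_edge_on_seg_between_faces[of e2 b w2 v2]
      non_forest_edge_of_seg_unique[of e1 b e2] assms(2,4)
    by (auto simp: dual_adj_def)
qed

lemma M_of_if_out_edge:
  assumes "Or w e v" "edge_on_seg \<psi> e b"
  shows "M_of \<psi> Or w b"
  unfolding M_of_def
proof (intro conjI exI)
  have "dual_adj \<psi> F w e v"
    using assms(1) is_orientation_adj[OF orientation] by blast
  then show "hex_adj w b"
    using hex_adj_if_edge[of e b w] assms(2) by (simp add: dual_adj_def)
  show "\<exists>!p. Or w (fst p) (snd p)"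
  proof (rule ex1I[of _ "(e, v)"])
    show "p = (e, v)" if "Or w (fst p) (snd p)" for p
      using out_edge_unique[OF that assms(1)] by (simp add: prod_eq_iff)
  qed (use assms(1) in simp)
  show "Or w e v" "edge_on_seg \<psi> e b"
    by (fact assms)+
qed

lemma M_of_white_ex1: "\<exists>!b. M_of \<psi> Or w b"
proof -
  obtain e v where out: "Or w e v"
    using out_edge_exists by blast
  then have "dual_adj \<psi> F w e v"
    using is_orientation_adj[OF orientation] by blast
  then have e: "T_edge \<psi> e" "edge_on_face \<psi> e w" "edge_on_face \<psi> e v" "w \<noteq> v"
    by (simp_all add: dual_adj_def)
  then obtain b where "fst e \<in> rel_interior (seg \<psi> b)" "snd e \<in> seg \<psi> b - rel_interior (seg \<psi> b)"
    by (auto simp: T_edge_def)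
  then have on_b: "edge_on_seg \<psi> e b"
    by (rule edge_on_seg_if_T_edge)
  show ?thesis
  proof
    show "M_of \<psi> Or w b"
      by (rule M_of_if_out_edge[OF out on_b])
  next
    fix b' assume "M_of \<psi> Or w b'"
    then obtain e' v' where "Or w e' v'" "edge_on_seg \<psi> e' b'"
      unfolding M_of_def by blast
    then have on_b': "edge_on_seg \<psi> e b'"
      using out_edge_unique(1)[OF _ out] by blast
    show "b' = b"
      using hex_adj_common_black_unique[OF hex_adj_if_edge[OF e(1) on_b' e(2)]
          hex_adj_if_edge[OF e(1) on_b e(2)] hex_adj_if_edge[OF e(1) on_b' e(3)]
          hex_adj_if_edge[OF e(1) on_b e(3)] e(4)] .
  qed
qed

lemma M_of_black_ex1: "\<exists>!w. M_of \<psi> Or w b"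
proof -
  obtain e u u' where "dual_adj \<psi> F u e u'" "edge_on_seg \<psi> e b"
    using dual_edge_crossing_seg by blast
  then obtain w v where out: "Or w e v" and on_b: "edge_on_seg \<psi> e b"
    using is_orientation_total[OF orientation] by blast
  show ?thesis
  proof
    show "M_of \<psi> Or w b"
      by (rule M_of_if_out_edge[OF out on_b])
  next
    fix x assume "M_of \<psi> Or x b"
    then obtain e' x' where "Or x e' x'" "edge_on_seg \<psi> e' b"
      unfolding M_of_def by blast
    then have "Or x e x'"
      using out_edges_on_seg_eq[OF _ _ out on_b] by blast
    then show "x = w"
      using leaving_face_unique out by blast
  qed
qed

lemma perfect_matching_M_of: "perfect_matching (M_of \<psi> Or)"
  unfolding perfect_matching_def
proof (intro conjI allI impI M_of_white_ex1 M_of_black_ex1)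
  show "hex_adj w b" if "M_of \<psi> Or w b" for w b
    using that by (simp add: M_of_def)
qed

end

theorem mainTheorem7:
  fixes \<psi> :: "face \<Rightarrow> complex"
    and F :: "(complex \<times> complex) set"
    and Or :: "white \<Rightarrow> complex \<times> complex \<Rightarrow> white \<Rightarrow> bool"
  assumes "is_Tgraph \<psi>"
    and "nondegenerate \<psi>"
    and "spanning_forest \<psi> F"
    and "oriented_towards_ends (dual_adj \<psi> F) Or"
  shows "perfect_matching (M_of \<psi> Or)"
proof -
  interpret T_graph_forest \<psi> F Or
    using assms by unfold_locales
  show ?thesis by (rule perfect_matching_M_of)
qed

end
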